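(* Let $X\subseteq\mathbb{R}$ be dense in $\mathbb{R}$ (with the subspace topology). Then $X$ is a Baire space if and only if $G\cap X$ is dense in $X$ for every dense $G_\delta$ subset $G$ of $\mathbb{R}$.
   Context: A Baire space is a space in which countable intersections of dense open sets are dense. *)

theory Defs
  imports "HOL-Analysis.Analysis"
begin

text \<open>A topological space is a Baire space if countable intersections of dense open sets
  are dense. Countable families are given as sequences (repetitions allowed), so the
  empty family is harmless.\<close>
definition Baire_space :: "'a topology \<Rightarrow> bool" where
  "Baire_space T \<longleftrightarrow>
     (\<forall>U :: nat \<Rightarrow> 'a set.
        (\<forall>n. openin T (U n) \<and> T closure_of (U n) = topspace T)
        \<longrightarrow> T closure_of (\<Inter>n. U n) = topspace T)"

end

theory Submission
  imports Defs
begin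

text \<open>The open dense subsets of a dense subspace \<open>X\<close> are exactly the traces on \<open>X\<close> of the
  open dense subsets of the ambient space. Hence \<open>X\<close> is a Baire space iff its trace of every
  countable intersection of open dense sets of the ambient space is dense in \<open>X\<close>. By the
  Baire category theorem for \<open>\<real>\<close>, these countable intersections are precisely the dense
  \<open>G\<^sub>\<delta>\<close> sets.\<close>

lemma closure_of_subtopology_eq_iff:
  fixes X A :: "'a::topological_space set"
  assumes "A \<subseteq> X"
  shows "subtopology euclidean X closure_of A = X \<longleftrightarrow> X \<subseteq> closure A"
  using assms by (auto simp: closure_of_subtopology Int_absorb1)

lemma dense_openin_dense_subtopologyE:
  fixes X V :: "'a::topological_space set"
  assumes "closure X = UNIV" "openin (subtopology euclidean X) V" "X \<subseteq> closure V"
  obtains W where "open W" "closure W = UNIV" "V = W \<inter> X"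
proof -
  obtain W where W: "open W" "V = W \<inter> X"
    using assms(2) by (auto simp: openin_subtopology)
  have "UNIV \<subseteq> closure W"
    using assms(1,3) W(2) closure_mono[of V W] closure_minimal[of X "closure W"] by auto
  then show thesis
    using that W by auto
qed

lemma Baire_space_dense_subtopology_iff:
  fixes X :: "'a::topological_space set"
  assumes "closure X = UNIV"
  shows "Baire_space (subtopology euclidean X) \<longleftrightarrow>
    (\<forall>U :: nat \<Rightarrow> 'a set. (\<forall>n. open (U n) \<and> closure (U n) = UNIV) \<longrightarrow>
       subtopology euclidean X closure_of ((\<Inter>n. U n) \<inter> X) = X)"
proof
  assume Baire: "Baire_space (subtopology euclidean X)"
  show "\<forall>U. (\<forall>n::nat. open (U n) \<and> closure (U n) = UNIV) \<longrightarrow>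
    subtopology euclidean X closure_of ((\<Inter>n. U n) \<inter> X) = X"
  proof (intro allI impI)
    fix U :: "nat \<Rightarrow> 'a set"
    assume U: "\<forall>n. open (U n) \<and> closure (U n) = UNIV"
    have "openin (subtopology euclidean X) (U n \<inter> X)" for n
      using U by (auto simp: openin_subtopology)
    moreover have "X \<subseteq> closure (U n \<inter> X)" for n
      using U assms closure_open_Int_superset[of "U n" X] by simp
    ultimately have "subtopology euclidean X closure_of (\<Inter>n. U n \<inter> X) = X"
      using Baire[unfolded Baire_space_def, rule_format, of "\<lambda>n. U n \<inter> X"]
      by (simp add: closure_of_subtopology_eq_iff)
    moreover have "(\<Inter>n. U n \<inter> X) = (\<Inter>n. U n) \<inter> X"
      by auto
    ultimately show "subtopology euclidean X closure_of ((\<Inter>n. U n) \<inter> X) = X"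
      by simp
  qed
next
  assume traces: "\<forall>U. (\<forall>n::nat. open (U n) \<and> closure (U n) = UNIV) \<longrightarrow>
    subtopology euclidean X closure_of ((\<Inter>n. U n) \<inter> X) = X"
  show "Baire_space (subtopology euclidean X)"
    unfolding Baire_space_def
  proof (intro allI impI)
    fix V :: "nat \<Rightarrow> 'a set"
    assume V: "\<forall>n. openin (subtopology euclidean X) (V n) \<and>
      subtopology euclidean X closure_of V n = topspace (subtopology euclidean X)"
    have "\<exists>W. open W \<and> closure W = UNIV \<and> V n = W \<inter> X" for n
    proof -
      have "V n \<subseteq> X"
        using V openin_subset by fastforce
      then have "X \<subseteq> closure (V n)"
        using V closure_of_subtopology_eq_iff[of "V n" X] by simp
      moreover have "openin (subtopology euclidean X) (V n)"
        using V by blast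
      ultimately show ?thesis
        by (meson dense_openin_dense_subtopologyE[OF assms])
    qed
    then obtain W where W: "\<And>n. open (W n)" "\<And>n. closure (W n) = UNIV" "\<And>n. V n = W n \<inter> X"
      by metis
    have "subtopology euclidean X closure_of ((\<Inter>n. W n) \<inter> X) = X"
      using traces W(1,2) by blast
    moreover have "(\<Inter>n. W n) \<inter> X = (\<Inter>n. V n)"
      using W(3) by auto
    ultimately show "subtopology euclidean X closure_of (\<Inter>n. V n) = topspace (subtopology euclidean X)"
      by simp
  qed
qed

lemma gdelta_in_euclidean_iff_INT_open:
  fixes G :: "'a::topological_space set"
  shows "gdelta_in euclidean G \<longleftrightarrow> (\<exists>U :: nat \<Rightarrow> 'a set. (\<forall>n. open (U n)) \<and> G = (\<Inter>n. U n))"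
proof
  assume "gdelta_in euclidean G"
  then obtain \<U> where \<U>: "countable \<U>" "\<And>V. V \<in> \<U> \<Longrightarrow> open V" "G = \<Inter>\<U>"
    by (auto simp: gdelta_in_alt intersection_of_def)
  show "\<exists>U. (\<forall>n::nat. open (U n)) \<and> G = (\<Inter>n. U n)"
  proof (cases "\<U> = {}")
    case True
    then show ?thesis
      using \<U>(3) by (intro exI[of _ "\<lambda>_. UNIV"]) auto
  next
    case False
    show ?thesis
    proof (intro exI conjI allI)
      show "open (from_nat_into \<U> n)" for n
        using \<U>(2) from_nat_into[OF False] by blast
      show "G = (\<Inter>n. from_nat_into \<U> n)"
        using \<U>(1,3) False by simp
    qed
  qed
next
  assume "\<exists>U. (\<forall>n::nat. open (U n)) \<and> G = (\<Inter>n. U n)"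
  then obtain U :: "nat \<Rightarrow> 'a set" where U: "\<forall>n. open (U n)" and G: "G = (\<Inter>n. U n)"
    by (elim exE conjE)
  have "gdelta_in euclidean (\<Inter>n. U n)"
    using U by (intro gdelta_in_Inter) (auto intro: open_imp_gdelta_in)
  with G show "gdelta_in euclidean G"
    by simp
qed

lemma dense_gdelta_iff_INT_open_dense:
  fixes G :: "'a::{real_normed_vector,heine_borel} set"
  shows "gdelta_in euclidean G \<and> closure G = UNIV \<longleftrightarrow>
    (\<exists>U :: nat \<Rightarrow> 'a set. (\<forall>n. open (U n) \<and> closure (U n) = UNIV) \<and> G = (\<Inter>n. U n))"
proof
  assume "gdelta_in euclidean G \<and> closure G = UNIV"
  then have "gdelta_in euclidean G" and dense: "closure G = UNIV"
    by auto
  then obtain U :: "nat \<Rightarrow> 'a set" where U: "\<forall>n. open (U n)" "G = (\<Inter>n. U n)"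
    unfolding gdelta_in_euclidean_iff_INT_open by (elim exE conjE)
  have "closure G \<subseteq> closure (U n)" for n
    using U(2) by (intro closure_mono) auto
  then have "closure (U n) = UNIV" for n
    using dense by auto
  with U show "\<exists>U. (\<forall>n::nat. open (U n) \<and> closure (U n) = UNIV) \<and> G = (\<Inter>n. U n)"
    by (intro exI[of _ U]) auto
next
  assume "\<exists>U. (\<forall>n::nat. open (U n) \<and> closure (U n) = UNIV) \<and> G = (\<Inter>n. U n)"
  then obtain U :: "nat \<Rightarrow> 'a set"
    where U: "\<forall>n. open (U n) \<and> closure (U n) = UNIV" and G: "G = (\<Inter>n. U n)"
    by (elim exE conjE)
  have "UNIV \<subseteq> closure (\<Inter>(range U))"
    using U by (intro Baire) auto
  moreover have "gdelta_in euclidean G"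
    unfolding gdelta_in_euclidean_iff_INT_open using U G by (intro exI[of _ U]) auto
  ultimately show "gdelta_in euclidean G \<and> closure G = UNIV"
    using G by auto
qed

theorem lemma4p6:
  fixes X :: "real set"
  assumes "closure X = UNIV"
  shows "Baire_space (subtopology euclidean X) \<longleftrightarrow>
    (\<forall>G :: real set. gdelta_in euclidean G \<and> closure G = UNIV \<longrightarrow>
        (subtopology euclidean X) closure_of (G \<inter> X) = X)"
proof -
  have "(\<forall>G :: real set. gdelta_in euclidean G \<and> closure G = UNIV \<longrightarrow>
          subtopology euclidean X closure_of (G \<inter> X) = X) \<longleftrightarrow>
        (\<forall>U :: nat \<Rightarrow> real set. (\<forall>n. open (U n) \<and> closure (U n) = UNIV) \<longrightarrow>
          subtopology euclidean X closure_of ((\<Inter>n. U n) \<inter> X) = X)"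
    (is "(\<forall>G. ?dense_gdelta G \<longrightarrow> ?meets G) \<longleftrightarrow> (\<forall>U. ?open_dense U \<longrightarrow> _)")
  proof (intro iffI allI impI)
    fix U :: "nat \<Rightarrow> real set"
    assume H: "\<forall>G. ?dense_gdelta G \<longrightarrow> ?meets G" and U: "?open_dense U"
    have "?dense_gdelta (\<Inter>n. U n)"
      unfolding dense_gdelta_iff_INT_open_dense using U by (intro exI[of _ U]) auto
    then show "?meets (\<Inter>n. U n)"
      using H by blast
  next
    fix G :: "real set"
    assume H: "\<forall>U. ?open_dense U \<longrightarrow> ?meets (\<Inter>n. U n)" and "?dense_gdelta G"
    then obtain U :: "nat \<Rightarrow> real set" where "?open_dense U" "G = (\<Inter>n. U n)"
      unfolding dense_gdelta_iff_INT_open_dense by (elim exE conjE)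
    then show "?meets G"
      using H by blast
  qed
  then show ?thesis
    using Baire_space_dense_subtopology_iff[OF assms] by simp
qed

end
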